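(* Let $D=(0,1)$, $\alpha\in(1,2)$, $\delta_0=\arccos(c_0/C_0)$, fix $\delta_1\in(\delta_0,\pi/2)$, and for $t>0$ let $\Gamma^t_{\delta_1}=\Gamma_1\cup\Gamma_2\cup\Gamma_t$ with $\Gamma_1=\{\rho e^{\mathrm{i}\delta_1}:\rho\ge t^{-1}\}$, $\Gamma_2=\{\rho e^{-\mathrm{i}\delta_1}:\rho\ge t^{-1}\}$, $\Gamma_t=\{t^{-1}e^{\mathrm{i}\theta}:\delta_1\le|\theta|\le\pi\}$. Then there is a constant $C>0$, independent of $t$, such that for all $t>0$, all $\varphi\in\widetilde H^{\alpha/2}(D)$ and all $z\in\Gamma^t_{\delta_1}$, $$|z|\,\|\varphi\|_{L^2(D)}^2+\|\varphi\|_{\widetilde H^{\alpha/2}(D)}^2\le C\,\big|z\|\varphi\|_{L^2(D)}^2-A(\varphi,\varphi)\big|.$$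
   Context: For $\gamma>0$, $({}_0I_x^\gamma f)(x)=\frac{1}{\Gamma(\gamma)}\int_0^x(x-t)^{\gamma-1}f(t)\,dt$ and $({}_xI_1^\gamma f)(x)=\frac{1}{\Gamma(\gamma)}\int_x^1(t-x)^{\gamma-1}f(t)\,dt$; for $n-1<\beta<n$, ${}_0^RD_x^\beta u=\frac{d^n}{dx^n}({}_0I_x^{n-\beta}u)$ and ${}_x^RD_1^\beta u=(-1)^n\frac{d^n}{dx^n}({}_xI_1^{n-\beta}u)$ (Riemann–Liouville), extended by continuity. $\widetilde H^s(D)$ is the set of $u\in H^s(D)$ whose zero extension is in $H^s(\mathbb{R})$. The sesquilinear form $A(\varphi,\psi)=-\big({}_0^RD_x^{\alpha/2}\varphi,\ {}_x^RD_1^{\alpha/2}\psi\big)$ on $U=\widetilde H^{\alpha/2}(D)$ is known to satisfy $\Re A(\psi,\psi)\ge c_0\|\psi\|_U^2$ and $|A(\varphi,\psi)|\le C_0\|\varphi\|_U\|\psi\|_U$ for constants $0<c_0\le C_0$. *)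

theory Defs
  imports "HOL-Analysis.Analysis"
begin

text \<open>The interval D = (0,1). Functions on D are represented by their zero
  extension, i.e. by maps real => complex vanishing outside D.\<close>

definition D_int :: "real set" where "D_int = {0<..<1}"

definition fourier :: "(real \<Rightarrow> complex) \<Rightarrow> real \<Rightarrow> complex" where
  "fourier u \<xi> = (LINT x|lborel. u x * exp (- \<i> * complex_of_real (\<xi> * x)))"

definition Htilde :: "real \<Rightarrow> (real \<Rightarrow> complex) \<Rightarrow> bool" where
  "Htilde s u \<longleftrightarrow> u \<in> borel_measurable lborel \<and> (\<forall>x. x \<notin> D_int \<longrightarrow> u x = 0)
     \<and> integrable lborel (\<lambda>x. (cmod (u x))\<^sup>2)
     \<and> integrable lborel (\<lambda>\<xi>. (1 + \<xi>\<^sup>2) powr s * (cmod (fourier u \<xi>))\<^sup>2)"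

definition Htilde_norm :: "real \<Rightarrow> (real \<Rightarrow> complex) \<Rightarrow> real" where
  "Htilde_norm s u = sqrt (LINT \<xi>|lborel. (1 + \<xi>\<^sup>2) powr s * (cmod (fourier u \<xi>))\<^sup>2)"

definition L2_norm :: "(real \<Rightarrow> complex) \<Rightarrow> real" where
  "L2_norm u = sqrt (LINT x:D_int|lborel. (cmod (u x))\<^sup>2)"

definition RL_int_left :: "real \<Rightarrow> (real \<Rightarrow> complex) \<Rightarrow> real \<Rightarrow> complex" where
  "RL_int_left \<gamma> f x = complex_of_real (1 / Gamma \<gamma>) *
     (LINT t:{0..x}|lborel. complex_of_real ((x - t) powr (\<gamma> - 1)) * f t)"

definition RL_int_right :: "real \<Rightarrow> (real \<Rightarrow> complex) \<Rightarrow> real \<Rightarrow> complex" where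
  "RL_int_right \<gamma> f x = complex_of_real (1 / Gamma \<gamma>) *
     (LINT t:{x..1}|lborel. complex_of_real ((t - x) powr (\<gamma> - 1)) * f t)"

definition test_fun :: "(real \<Rightarrow> real) \<Rightarrow> bool" where
  "test_fun \<psi> \<longleftrightarrow> (\<forall>n x. ((deriv ^^ n) \<psi>) differentiable (at x))
     \<and> (\<exists>a b. 0 < a \<and> b < 1 \<and> (\<forall>x. x \<notin> {a..b} \<longrightarrow> \<psi> x = 0))"

definition weak_deriv_D :: "(real \<Rightarrow> complex) \<Rightarrow> (real \<Rightarrow> complex) \<Rightarrow> bool" where
  "weak_deriv_D F g \<longleftrightarrow> set_integrable lborel D_int F
     \<and> g \<in> borel_measurable lborel
     \<and> set_integrable lborel D_int (\<lambda>x. (cmod (g x))\<^sup>2)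
     \<and> (\<forall>\<psi>. test_fun \<psi> \<longrightarrow>
          (LINT x:D_int|lborel. F x * complex_of_real (deriv \<psi> x))
          = - (LINT x:D_int|lborel. g x * complex_of_real (\<psi> x)))"

text \<open>Riemann--Liouville derivatives of order 0 < beta < 1 (n = 1), understood in
  the weak sense (this is the extension by continuity to H-tilde^{beta}(D)).\<close>
definition RL_deriv_left :: "real \<Rightarrow> (real \<Rightarrow> complex) \<Rightarrow> real \<Rightarrow> complex" where
  "RL_deriv_left \<beta> u = (SOME g. weak_deriv_D (RL_int_left (1 - \<beta>) u) g)"

definition RL_deriv_right :: "real \<Rightarrow> (real \<Rightarrow> complex) \<Rightarrow> real \<Rightarrow> complex" where
  "RL_deriv_right \<beta> u = (\<lambda>x. - (SOME g. weak_deriv_D (RL_int_right (1 - \<beta>) u) g) x)"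

definition form_A :: "real \<Rightarrow> (real \<Rightarrow> complex) \<Rightarrow> (real \<Rightarrow> complex) \<Rightarrow> complex" where
  "form_A \<alpha> \<phi> \<psi> = - (LINT x:D_int|lborel.
       RL_deriv_left (\<alpha>/2) \<phi> x * cnj (RL_deriv_right (\<alpha>/2) \<psi> x))"

definition contour :: "real \<Rightarrow> real \<Rightarrow> complex set" where
  "contour \<delta>\<^sub>1 t =
     {z. \<exists>\<rho>. \<rho> \<ge> 1 / t \<and> z = complex_of_real \<rho> * cis \<delta>\<^sub>1}
   \<union> {z. \<exists>\<rho>. \<rho> \<ge> 1 / t \<and> z = complex_of_real \<rho> * cis (- \<delta>\<^sub>1)}
   \<union> {z. \<exists>\<theta>. \<delta>\<^sub>1 \<le> \<bar>\<theta>\<bar> \<and> \<bar>\<theta>\<bar> \<le> pi \<and> z = complex_of_real (1 / t) * cis \<theta>}"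

end

theory Submission
  imports Defs
begin

text \<open>By coercivity and boundedness, the numbers \<open>A(\<phi>,\<phi>)\<close> lie in the sector
  \<open>|arg w| \<le> \<delta>\<^sub>0\<close>, while every \<open>z \<in> \<Gamma>\<^sup>t\<^sub>\<delta>\<^sub>1\<close>, and hence \<open>z \<parallel>\<phi>\<parallel>\<^sup>2\<close>, lies in
  \<open>|arg w| \<ge> \<delta>\<^sub>1\<close>. Two complex numbers in sectors separated by a positive angle
  satisfy \<open>|u| + |a| \<le> C |u - a|\<close>, and \<open>\<parallel>\<phi>\<parallel>\<^sup>2\<^sub>U \<le> |A(\<phi>,\<phi>)| / c\<^sub>0\<close> converts
  \<open>|A(\<phi>,\<phi>)|\<close> into the energy norm. The constant depends only on \<open>c\<^sub>0\<close>,
  \<open>cos \<delta>\<^sub>1\<close> and \<open>c\<^sub>0/C\<^sub>0 = cos \<delta>\<^sub>0\<close>, not on \<open>t\<close>. Only coercivity and boundedness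
  of \<open>A\<close> enter.\<close>

lemma norm_add_sq_le_norm_diff_sq:
  fixes u a :: complex and c :: real
  assumes "Re (u * cnj a) \<le> c * cmod u * cmod a" "-1 \<le> c"
  shows "(1 - c) / 2 * (cmod u + cmod a)\<^sup>2 \<le> (cmod (u - a))\<^sup>2"
proof -
  have "(cmod (u - a))\<^sup>2 = (cmod u)\<^sup>2 + (cmod a)\<^sup>2 - 2 * Re (u * cnj a)"
    unfolding cmod_power2 by (simp add: power2_eq_square algebra_simps)
  moreover have "(1 - c) / 2 * (cmod u + cmod a)\<^sup>2
      = (cmod u)\<^sup>2 + (cmod a)\<^sup>2 - 2 * (c * cmod u * cmod a) - (1 + c) / 2 * (cmod u - cmod a)\<^sup>2"
    by (simp add: power2_eq_square field_simps)
  moreover have "0 \<le> (1 + c) / 2 * (cmod u - cmod a)\<^sup>2"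
    using assms(2) by simp
  ultimately show ?thesis
    using assms(1) by linarith
qed

text \<open>\<open>|a| u - |u| a\<close> has norm at least minus its real part, which is
  \<open>\<ge> (k - m) |u| |a|\<close>, and its squared norm is \<open>2 |u| |a| (|u| |a| - Re (u cnj a))\<close>.\<close>

lemma sector_separation_inner_le:
  fixes u a :: complex and k m :: real
  assumes "k * cmod a \<le> Re a" "Re u \<le> m * cmod u" "m < k"
  shows "Re (u * cnj a) \<le> (1 - (k - m)\<^sup>2 / 2) * cmod u * cmod a"
proof (cases "cmod u * cmod a = 0")
  case True
  then show ?thesis by auto
next
  case False
  define p q where "p = cmod u" and "q = cmod a"
  have pq: "p * q > 0" using False by (simp add: p_def q_def)
  have "(cmod (q * u - p * a))\<^sup>2
      = q\<^sup>2 * (cmod u)\<^sup>2 + p\<^sup>2 * (cmod a)\<^sup>2 - 2 * p * q * Re (u * cnj a)"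
    unfolding cmod_power2 by (simp add: power2_eq_square algebra_simps)
  then have sq: "(cmod (q * u - p * a))\<^sup>2 = 2 * (p * q) * (p * q - Re (u * cnj a))"
    by (simp add: p_def q_def power2_eq_square algebra_simps)
  have "p * q * (k - m) \<le> Re (p * a - q * u)"
    using mult_left_mono[OF assms(1), of p] mult_left_mono[OF assms(2), of q]
    by (simp add: p_def q_def algebra_simps)
  also have "\<dots> \<le> cmod (q * u - p * a)"
    by (metis complex_Re_le_cmod norm_minus_commute)
  finally have "(p * q * (k - m))\<^sup>2 \<le> (cmod (q * u - p * a))\<^sup>2"
    using pq assms(3) by (intro power_mono) auto
  then have "(p * q) * (p * q * (k - m)\<^sup>2) \<le> (p * q) * (2 * (p * q - Re (u * cnj a)))"
    unfolding sq by (simp add: power2_eq_square algebra_simps)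
  then have "p * q * (k - m)\<^sup>2 \<le> 2 * (p * q - Re (u * cnj a))"
    using pq mult_left_le_imp_le by blast
  then show ?thesis
    by (simp add: p_def q_def algebra_simps)
qed

lemma sector_separation_norm_le:
  fixes u a :: complex and k m :: real
  assumes "k * cmod a \<le> Re a" "Re u \<le> m * cmod u" "m < k" "k \<le> 1" "-1 \<le> m"
  shows "(k - m) / 2 * (cmod u + cmod a) \<le> cmod (u - a)"
proof (rule power2_le_imp_le)
  have "(k - m)\<^sup>2 \<le> 2\<^sup>2"
    by (rule power_mono) (use assms(3-5) in linarith)+
  have "((k - m) / 2 * (cmod u + cmod a))\<^sup>2
      = (1 - (1 - (k - m)\<^sup>2 / 2)) / 2 * (cmod u + cmod a)\<^sup>2"
    by (simp add: power2_eq_square)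
  also have "\<dots> \<le> (cmod (u - a))\<^sup>2"
    using norm_add_sq_le_norm_diff_sq[OF sector_separation_inner_le[OF assms(1-3)]]
      \<open>(k - m)\<^sup>2 \<le> 2\<^sup>2\<close> by simp
  finally show "((k - m) / 2 * (cmod u + cmod a))\<^sup>2 \<le> (cmod (u - a))\<^sup>2" .
qed simp

lemma contour_Re_le_cos_norm:
  assumes "t > 0" "0 \<le> \<delta>\<^sub>1" "\<delta>\<^sub>1 \<le> pi" "z \<in> contour \<delta>\<^sub>1 t"
  shows "Re z \<le> cos \<delta>\<^sub>1 * cmod z"
  using assms(4) unfolding contour_def
proof (elim UnE CollectE exE conjE)
  fix \<rho> assume "1 / t \<le> \<rho>" "z = complex_of_real \<rho> * cis \<delta>\<^sub>1"
  moreover have "0 \<le> \<rho>" using \<open>1 / t \<le> \<rho>\<close> assms(1) by (smt (verit) divide_pos_pos)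
  ultimately show ?thesis by (simp add: norm_mult)
next
  fix \<rho> assume "1 / t \<le> \<rho>" "z = complex_of_real \<rho> * cis (- \<delta>\<^sub>1)"
  moreover have "0 \<le> \<rho>" using \<open>1 / t \<le> \<rho>\<close> assms(1) by (smt (verit) divide_pos_pos)
  ultimately show ?thesis by (simp add: norm_mult)
next
  fix \<theta> assume \<theta>: "\<delta>\<^sub>1 \<le> \<bar>\<theta>\<bar>" "\<bar>\<theta>\<bar> \<le> pi" and z: "z = complex_of_real (1 / t) * cis \<theta>"
  have "cos \<theta> = cos \<bar>\<theta>\<bar>" by (simp add: abs_if)
  also have "\<dots> \<le> cos \<delta>\<^sub>1" using \<theta> assms(2) by (intro cos_monotone_0_pi_le) auto
  finally show ?thesis
    using z assms(1) by (simp add: norm_divide divide_right_mono)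
qed

text \<open>The abstract resolvent estimate: \<open>a\<close> plays \<open>A(\<phi>,\<phi>)\<close>, \<open>N\<close> the squared energy
  norm and \<open>L\<close> the squared \<open>L\<^sup>2\<close> norm.\<close>

lemma sectorial_resolvent_estimate:
  fixes a z :: complex and c\<^sub>0 C\<^sub>0 m L N :: real
  assumes "0 < c\<^sub>0" "c\<^sub>0 \<le> C\<^sub>0" "c\<^sub>0 * N \<le> Re a" "cmod a \<le> C\<^sub>0 * N"
    and "Re z \<le> m * cmod z" "-1 \<le> m" "m < c\<^sub>0 / C\<^sub>0" "0 \<le> L"
  shows "cmod z * L + N \<le> max 1 (1 / c\<^sub>0) * (2 / (c\<^sub>0 / C\<^sub>0 - m)) * cmod (z * L - a)"
proof -
  define k where "k = c\<^sub>0 / C\<^sub>0"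
  define u where "u = z * complex_of_real L"
  have "k \<le> 1" using assms(1,2) by (simp add: k_def)
  have "k * cmod a \<le> Re a"
    using assms(1-4) mult_left_mono[OF assms(4), of k] by (simp add: k_def)
  moreover have "Re u \<le> m * cmod u"
    using mult_right_mono[OF assms(5,8)] assms(8) by (simp add: u_def norm_mult)
  ultimately have sep: "cmod u + cmod a \<le> 2 / (k - m) * cmod (u - a)"
    using sector_separation_norm_le[of k a u m] \<open>k \<le> 1\<close> assms(6,7)
    by (simp add: k_def field_simps)
  have "N \<le> cmod a / c\<^sub>0"
    using assms(1,3) complex_Re_le_cmod[of a] by (simp add: field_simps)
  also have "\<dots> \<le> max 1 (1 / c\<^sub>0) * cmod a"
    using mult_right_mono[of "1 / c\<^sub>0" "max 1 (1 / c\<^sub>0)" "cmod a"] by simp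
  finally have "cmod z * L + N \<le> cmod u + max 1 (1 / c\<^sub>0) * cmod a"
    using assms(8) by (simp add: u_def norm_mult)
  also have "\<dots> \<le> max 1 (1 / c\<^sub>0) * (cmod u + cmod a)"
    using mult_right_mono[of 1 "max 1 (1 / c\<^sub>0)" "cmod u"] by (simp add: distrib_left)
  also have "\<dots> \<le> max 1 (1 / c\<^sub>0) * (2 / (k - m) * cmod (u - a))"
    using sep by (intro mult_left_mono) auto
  finally show ?thesis by (simp add: u_def k_def)
qed

theorem lemma4p4:
  fixes \<alpha> c\<^sub>0 C\<^sub>0 \<delta>\<^sub>1 :: real
  assumes "1 < \<alpha>" and "\<alpha> < 2"
    and "0 < c\<^sub>0" and "c\<^sub>0 \<le> C\<^sub>0"
    and coercive: "\<forall>\<psi>. Htilde (\<alpha>/2) \<psi> \<longrightarrow>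
                     Re (form_A \<alpha> \<psi> \<psi>) \<ge> c\<^sub>0 * (Htilde_norm (\<alpha>/2) \<psi>)\<^sup>2"
    and bounded: "\<forall>\<phi> \<psi>. Htilde (\<alpha>/2) \<phi> \<and> Htilde (\<alpha>/2) \<psi> \<longrightarrow>
                     cmod (form_A \<alpha> \<phi> \<psi>) \<le> C\<^sub>0 * Htilde_norm (\<alpha>/2) \<phi> * Htilde_norm (\<alpha>/2) \<psi>"
    and "arccos (c\<^sub>0 / C\<^sub>0) < \<delta>\<^sub>1" and "\<delta>\<^sub>1 < pi / 2"
  shows "\<exists>C>0. \<forall>t>0. \<forall>\<phi>. Htilde (\<alpha>/2) \<phi> \<longrightarrow> (\<forall>z \<in> contour \<delta>\<^sub>1 t.
           cmod z * (L2_norm \<phi>)\<^sup>2 + (Htilde_norm (\<alpha>/2) \<phi>)\<^sup>2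
             \<le> C * cmod (z * complex_of_real ((L2_norm \<phi>)\<^sup>2) - form_A \<alpha> \<phi> \<phi>))"
proof -
  have k: "0 < c\<^sub>0 / C\<^sub>0" "c\<^sub>0 / C\<^sub>0 \<le> 1" using assms(3,4) by auto
  have "0 \<le> \<delta>\<^sub>1" using assms(7) arccos_lbound[of "c\<^sub>0 / C\<^sub>0"] k by linarith
  have "cos \<delta>\<^sub>1 < cos (arccos (c\<^sub>0 / C\<^sub>0))"
    using assms(7,8) \<open>0 \<le> \<delta>\<^sub>1\<close> arccos_lbound[of "c\<^sub>0 / C\<^sub>0"] k by (intro cos_monotone_0_pi) auto
  then have m: "cos \<delta>\<^sub>1 < c\<^sub>0 / C\<^sub>0" using k by (simp add: cos_arccos)
  define C where "C = max 1 (1 / c\<^sub>0) * (2 / (c\<^sub>0 / C\<^sub>0 - cos \<delta>\<^sub>1))"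
  have "C > 0" using m by (simp add: C_def)
  moreover have estimate: "cmod z * (L2_norm \<phi>)\<^sup>2 + (Htilde_norm (\<alpha>/2) \<phi>)\<^sup>2
      \<le> C * cmod (z * complex_of_real ((L2_norm \<phi>)\<^sup>2) - form_A \<alpha> \<phi> \<phi>)"
    if "t > 0" "Htilde (\<alpha>/2) \<phi>" "z \<in> contour \<delta>\<^sub>1 t" for t \<phi> z
    unfolding C_def
  proof (rule sectorial_resolvent_estimate[OF assms(3,4) _ _ _ _ m])
    show "c\<^sub>0 * (Htilde_norm (\<alpha>/2) \<phi>)\<^sup>2 \<le> Re (form_A \<alpha> \<phi> \<phi>)"
      using coercive that(2) by blast
    show "cmod (form_A \<alpha> \<phi> \<phi>) \<le> C\<^sub>0 * (Htilde_norm (\<alpha>/2) \<phi>)\<^sup>2"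
      using bounded that(2) by (simp add: power2_eq_square mult.assoc)
    show "Re z \<le> cos \<delta>\<^sub>1 * cmod z"
      using contour_Re_le_cos_norm[OF that(1) \<open>0 \<le> \<delta>\<^sub>1\<close> _ that(3)] assms(8) pi_gt_zero
      by linarith
    show "- 1 \<le> cos \<delta>\<^sub>1" by (rule cos_ge_minus_one)
    show "0 \<le> (L2_norm \<phi>)\<^sup>2" by (rule zero_le_power2)
  qed
  ultimately show ?thesis by (intro exI[of _ C] conjI allI impI ballI estimate)
qed

end
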